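(* Let $V\subset\mathbb R^3$ be a bounded region, $\beta,m>0$, $N\ge1$, and let $\alpha:\bar V\times[0,\lambda_0)\to(0,\infty)$, $(\mathbf x,\lambda)\mapsto\alpha(\mathbf x,\lambda)$, be smooth with $\alpha(\mathbf x,0)=1$ and $\partial_\lambda\alpha(\mathbf x,0)=0$ for all $\mathbf x$. For $\lambda=1/c>0$ put $\gamma_\lambda(\mathbf x)=\alpha(\mathbf x,\lambda)\beta m/\lambda^2$ and $$Z_\lambda=\frac{1}{N!}\left[4\pi\left(\frac{m}{2\pi\hbar\lambda}\right)^3e^{\beta m/\lambda^2}\int_V\frac{K_2(\gamma_\lambda(\mathbf x))}{\gamma_\lambda(\mathbf x)}\,d\mathbf x\right]^N,\qquad F_\lambda(\beta,V,N)=-\frac1\beta\ln Z_\lambda ,$$ where $K_2$ is the modified Bessel function of the second kind. Then $$\lim_{\lambda\to0^+}F_\lambda(\beta,V,N)=F_{\mathrm{Newt.}}(\beta,V,N):=-\frac1\beta\ln Z_{\mathrm{Newt.}},\qquad Z_{\mathrm{Newt.}}=\left(\frac{m}{2\pi\hbar^2\beta}\right)^{\frac32N}\frac{1}{N!}\left(\int_Ve^{-\frac12\beta m\,\partial_\lambda^2\alpha(\mathbf x,0)}\,d\mathbf x\right)^N .$$ *)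

theory Defs
  imports "HOL-Analysis.Analysis"
begin

text \<open>C-infinity smoothness on an open set: f is differentiable on U and every
  directional derivative (taken along a fixed vector v) is again smooth on U.\<close>
coinductive smooth_on :: "'a::euclidean_space set \<Rightarrow> ('a \<Rightarrow> real) \<Rightarrow> bool" where
  "\<lbrakk> open U; f differentiable_on U;
     \<forall>v. smooth_on U (\<lambda>x. frechet_derivative f (at x) v) \<rbrakk> \<Longrightarrow> smooth_on U f"

text \<open>Modified Bessel function of the second kind (Macdonald function), for x > 0:
  K_nu(x) = integral over t from 0 to infinity of exp(-x cosh t) cosh(nu t).\<close>
definition besselK :: "real \<Rightarrow> real \<Rightarrow> real" where
  "besselK nu x = integral {0..} (\<lambda>t. exp (- x * cosh t) * cosh (nu * t))"

end

theory Submission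
  imports Defs "HOL-Probability.Sinc_Integral" "HOL-Real_Asymp.Real_Asymp"
begin

text \<open>
  Laplace's method on the integral representation of \<open>K\<^sub>\<nu>\<close> (substituting \<open>t = sqrt (2/y) s\<close>,
  the integrand tends to \<open>exp (- s\<^sup>2)\<close>) gives \<open>sqrt y e\<^sup>y K\<^sub>\<nu>(y) \<rightarrow> sqrt (\<pi>/2)\<close> as \<open>y \<rightarrow> \<infinity>\<close>.
  Writing \<open>\<gamma> = \<alpha> \<beta> m / \<lambda>\<^sup>2\<close>, the integrand of the partition function is a constant times
  \<open>sqrt \<gamma> e\<^sup>\<gamma> K\<^sub>2(\<gamma>)\<close> times \<open>\<alpha>\<^sup>-\<^sup>3\<^sup>/\<^sup>2 exp (- \<beta> m (\<alpha> - 1) / \<lambda>\<^sup>2)\<close>, and since \<open>\<alpha> = 1\<close> and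
  \<open>\<partial>\<^sub>\<lambda>\<alpha> = 0\<close> at \<open>\<lambda> = 0\<close>, Taylor's theorem gives \<open>(\<alpha> - 1) / \<lambda>\<^sup>2 \<rightarrow> \<partial>\<^sub>\<lambda>\<^sup>2\<alpha> / 2\<close>.
  On the compact set \<open>closure V\<close> all of this holds with uniform bounds, so dominated convergence
  moves the limit under the integral; the limiting integral is positive, so the limit also
  passes through the logarithm.
\<close>

section \<open>The Macdonald function\<close>

lemma cosh_le_exp_abs: "cosh (x::real) \<le> exp \<bar>x\<bar>"
proof -
  have "cosh x = (exp \<bar>x\<bar> + exp (- \<bar>x\<bar>)) / 2"
    by (metis cosh_real_abs cosh_field_def)
  moreover have "exp (- \<bar>x\<bar>) \<le> exp \<bar>x\<bar>" by simp
  ultimately show ?thesis by argo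
qed

lemma cosh_ge_1_plus_square: "1 + x\<^sup>2 / 4 \<le> cosh (x::real)"
proof -
  have "1 + \<bar>x\<bar> + \<bar>x\<bar>\<^sup>2 / 2 \<le> exp \<bar>x\<bar>" by (rule exp_lower_Taylor_quadratic) simp
  moreover have "1 - \<bar>x\<bar> \<le> exp (- \<bar>x\<bar>)" using exp_ge_add_one_self[of "- \<bar>x\<bar>"] by simp
  moreover have "cosh x = (exp \<bar>x\<bar> + exp (- \<bar>x\<bar>)) / 2"
    by (metis cosh_real_abs cosh_field_def)
  ultimately show ?thesis by (simp add: field_simps)
qed

lemma borel_measurable_cosh [measurable]: "(cosh :: real \<Rightarrow> real) \<in> borel_measurable borel"
  by (intro borel_measurable_continuous_onI continuous_intros)

definition besselK_integrand :: "real \<Rightarrow> real \<Rightarrow> real \<Rightarrow> real" where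
  "besselK_integrand \<nu> y t = indicator {0..} t * (exp (- y * cosh t) * cosh (\<nu> * t))"

lemma besselK_integrand_measurable [measurable]: "besselK_integrand \<nu> y \<in> borel_measurable borel"
  unfolding besselK_integrand_def by measurable

lemma besselK_integrand_nonneg: "0 \<le> besselK_integrand \<nu> y t"
  unfolding besselK_integrand_def by (simp add: indicator_def)

lemma besselK_integrand_antimono: "y \<le> y' \<Longrightarrow> besselK_integrand \<nu> y' t \<le> besselK_integrand \<nu> y t"
  unfolding besselK_integrand_def
  by (auto simp: indicator_def intro!: mult_right_mono mult_right_mono_neg)

lemma besselK_integrand_bound:
  fixes y t :: real
  assumes y: "y > 0" and t: "t \<ge> 0"
  shows "exp (- y * cosh t) * cosh (\<nu> * t) \<le> exp (- y + (\<bar>\<nu>\<bar> + 1)\<^sup>2 / y) * exp (- t)"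
proof -
  have "exp (- y * cosh t) * cosh (\<nu> * t) \<le> exp (- y * cosh t) * exp (\<bar>\<nu>\<bar> * t)"
    using cosh_le_exp_abs[of "\<nu> * t"] t by (intro mult_left_mono) (auto simp: abs_mult)
  also have "\<dots> \<le> exp (- y + (\<bar>\<nu>\<bar> + 1)\<^sup>2 / y - t)"
  proof -
    have "y * (t\<^sup>2 / 4) \<le> y * (cosh t - 1)"
      using cosh_ge_1_plus_square[of t] y by (intro mult_left_mono) auto
    moreover have "y * (t\<^sup>2 / 4) - (\<bar>\<nu>\<bar> + 1) * t + (\<bar>\<nu>\<bar> + 1)\<^sup>2 / y = (y * t - 2 * (\<bar>\<nu>\<bar> + 1))\<^sup>2 / (4 * y)"
      using y by (simp add: field_simps power2_eq_square)
    moreover have "0 \<le> (y * t - 2 * (\<bar>\<nu>\<bar> + 1))\<^sup>2 / (4 * y)" using y by simp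
    ultimately show ?thesis by (simp add: mult_exp_exp algebra_simps)
  qed
  also have "\<dots> = exp (- y + (\<bar>\<nu>\<bar> + 1)\<^sup>2 / y) * exp (- t)" by (simp add: exp_add[symmetric])
  finally show ?thesis .
qed

lemma integrable_exp_minus_Ici: "integrable lborel (\<lambda>t::real. exp (- t) * indicator {0..} t)"
  using has_bochner_integral_I0i_power_exp_m'[of 0] by (simp add: integrable.intros)

lemma integrable_besselK_integrand:
  assumes "y > 0" shows "integrable lborel (besselK_integrand \<nu> y)"
proof (rule Bochner_Integration.integrable_bound)
  show "integrable lborel (\<lambda>t. exp (- y + (\<bar>\<nu>\<bar> + 1)\<^sup>2 / y) * (exp (- t) * indicator {0..} t))"
    using integrable_exp_minus_Ici by (rule integrable_mult_right)
  show "AE t in lborel. norm (besselK_integrand \<nu> y t)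
          \<le> norm (exp (- y + (\<bar>\<nu>\<bar> + 1)\<^sup>2 / y) * (exp (- t) * indicator {0..} t))"
    using besselK_integrand_bound[OF assms] besselK_integrand_nonneg[of \<nu> y]
    by (auto simp: besselK_integrand_def indicator_def)
qed simp

lemma besselK_eq_lebesgue_integral:
  assumes "y > 0" shows "besselK \<nu> y = (\<integral>t. besselK_integrand \<nu> y t \<partial>lborel)"
proof -
  have "set_integrable lborel {0..} (\<lambda>t. exp (- y * cosh t) * cosh (\<nu> * t))"
    using integrable_besselK_integrand[OF assms]
    unfolding set_integrable_def besselK_integrand_def by simp
  from set_borel_integral_eq_integral(2)[OF this] show ?thesis
    unfolding besselK_def set_lebesgue_integral_def besselK_integrand_def by simp
qed

lemma besselK_nonneg: "y > 0 \<Longrightarrow> 0 \<le> besselK \<nu> y"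
  by (simp add: besselK_eq_lebesgue_integral integral_nonneg_AE besselK_integrand_nonneg)

lemma continuous_on_besselK: "continuous_on {0<..} (besselK \<nu>)"
proof (rule continuous_on_sequentiallyI)
  fix u and a :: real
  assume u: "\<forall>n. u n \<in> {0<..}" and a: "a \<in> {0<..}" and lim: "u \<longlonglongrightarrow> a"
  have a0: "a > 0" using a by simp
  \<comment> \<open>Truncating at \<open>a/2\<close> makes \<open>besselK_integrand \<nu> (a/2)\<close> a dominating function.\<close>
  define v where "v n = max (u n) (a/2)" for n
  have "v \<longlonglongrightarrow> max a (a/2)" unfolding v_def by (intro tendsto_intros lim)
  then have v_lim: "v \<longlonglongrightarrow> a" using a0 by (simp add: max_def)
  have "(\<lambda>n. \<integral>t. besselK_integrand \<nu> (v n) t \<partial>lborel) \<longlonglongrightarrow> (\<integral>t. besselK_integrand \<nu> a t \<partial>lborel)"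
  proof (rule integral_dominated_convergence[where w="besselK_integrand \<nu> (a/2)"])
    show "integrable lborel (besselK_integrand \<nu> (a/2))"
      using a0 by (intro integrable_besselK_integrand) simp
    show "AE t in lborel. (\<lambda>n. besselK_integrand \<nu> (v n) t) \<longlonglongrightarrow> besselK_integrand \<nu> a t"
      unfolding besselK_integrand_def by (intro AE_I2 tendsto_intros v_lim)
    show "AE t in lborel. norm (besselK_integrand \<nu> (v n) t) \<le> besselK_integrand \<nu> (a/2) t" for n
      using besselK_integrand_antimono[of "a/2" "v n"] besselK_integrand_nonneg
      by (intro AE_I2) (simp add: v_def)
  qed auto
  moreover have "eventually (\<lambda>n. a/2 < u n) sequentially"
    using lim a0 by (intro order_tendstoD) auto
  then have "eventually (\<lambda>n. (\<integral>t. besselK_integrand \<nu> (v n) t \<partial>lborel) = besselK \<nu> (u n)) sequentially"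
    by (rule eventually_mono) (use a0 in \<open>simp add: v_def besselK_eq_lebesgue_integral\<close>)
  ultimately have "(\<lambda>n. besselK \<nu> (u n)) \<longlonglongrightarrow> (\<integral>t. besselK_integrand \<nu> a t \<partial>lborel)"
    by (rule Lim_transform_eventually)
  then show "(\<lambda>n. besselK \<nu> (u n)) \<longlonglongrightarrow> besselK \<nu> a"
    using a0 by (simp add: besselK_eq_lebesgue_integral)
qed

definition besselK_laplace_integrand :: "real \<Rightarrow> real \<Rightarrow> real \<Rightarrow> real" where
  "besselK_laplace_integrand \<nu> y s = indicator {0..} s *
     (exp (- y * (cosh (sqrt (2/y) * s) - 1)) * cosh (\<nu> * (sqrt (2/y) * s)))"

lemma besselK_laplace_integrand_measurable [measurable]:
  "besselK_laplace_integrand \<nu> y \<in> borel_measurable borel"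
  unfolding besselK_laplace_integrand_def by measurable

lemma besselK_eq_laplace_integral:
  assumes y: "y > 0"
  shows "sqrt y * exp y * besselK \<nu> y = sqrt 2 * (\<integral>s. besselK_laplace_integrand \<nu> y s \<partial>lborel)"
proof -
  define r where "r = sqrt (2/y)"
  have r: "r > 0" using y by (simp add: r_def)
  have "besselK \<nu> y = \<bar>r\<bar> *\<^sub>R (\<integral>s. besselK_integrand \<nu> y (0 + r * s) \<partial>lborel)"
    unfolding besselK_eq_lebesgue_integral[OF y] using r by (intro lborel_integral_real_affine) simp
  then have "sqrt y * exp y * besselK \<nu> y
      = (sqrt y * r) * (\<integral>s. exp y * besselK_integrand \<nu> y (r * s) \<partial>lborel)"
    using r by (simp add: mult_ac)
  moreover have "sqrt y * r = sqrt 2" using y by (simp add: r_def real_sqrt_mult[symmetric])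
  moreover have "exp y * besselK_integrand \<nu> y (r * s) = besselK_laplace_integrand \<nu> y s" for s
  proof -
    have "indicator {0..} (r * s) = (indicator {0..} s :: real)"
      using r by (simp add: indicator_def zero_le_mult_iff)
    moreover have "exp y * exp (- y * cosh (r * s)) = exp (- y * (cosh (r * s) - 1))"
      by (simp add: mult_exp_exp algebra_simps)
    ultimately show ?thesis
      unfolding besselK_integrand_def besselK_laplace_integrand_def r_def[symmetric]
      by (simp add: mult_ac)
  qed
  ultimately show ?thesis by simp
qed

lemma besselK_laplace_integrand_bound:
  assumes y: "y \<ge> 2"
  shows "norm (besselK_laplace_integrand \<nu> y s) \<le> exp ((\<bar>\<nu>\<bar> + 1)\<^sup>2 / 2) * (exp (- s) * indicator {0..} s)"
proof (cases "s \<ge> 0")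
  case False
  then show ?thesis by (simp add: besselK_laplace_integrand_def)
next
  case s: True
  define r where "r = sqrt (2/y)"
  have r: "0 < r" "r \<le> 1" using y by (auto simp: r_def)
  have "cosh (\<nu> * (r * s)) \<le> exp (\<bar>\<nu>\<bar> * (r * s))"
    using cosh_le_exp_abs[of "\<nu> * (r * s)"] r s by (simp add: abs_mult)
  also have "\<dots> \<le> exp (\<bar>\<nu>\<bar> * s)"
    using r s by (simp add: mult_left_mono mult_left_le_one_le)
  finally have cosh_le: "cosh (\<nu> * (r * s)) \<le> exp (\<bar>\<nu>\<bar> * s)" .
  have "s\<^sup>2 / 2 = y * ((r * s)\<^sup>2 / 4)" using y by (simp add: r_def power_mult_distrib)
  also have "\<dots> \<le> y * (cosh (r * s) - 1)"
    using cosh_ge_1_plus_square[of "r * s"] y by (intro mult_left_mono) auto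
  finally have exp_le: "exp (- y * (cosh (r * s) - 1)) \<le> exp (- (s\<^sup>2 / 2))" by simp
  have "- (s\<^sup>2 / 2) + \<bar>\<nu>\<bar> * s \<le> (\<bar>\<nu>\<bar> + 1)\<^sup>2 / 2 - s"
    using zero_le_power2[of "s - (\<bar>\<nu>\<bar> + 1)"] by (simp add: power2_eq_square algebra_simps)
  then have quadratic: "exp (- (s\<^sup>2 / 2)) * exp (\<bar>\<nu>\<bar> * s) \<le> exp ((\<bar>\<nu>\<bar> + 1)\<^sup>2 / 2) * exp (- s)"
    by (simp add: mult_exp_exp)
  have "besselK_laplace_integrand \<nu> y s = exp (- y * (cosh (r * s) - 1)) * cosh (\<nu> * (r * s))"
    using s by (simp add: besselK_laplace_integrand_def r_def)
  also have "\<dots> \<le> exp (- (s\<^sup>2 / 2)) * exp (\<bar>\<nu>\<bar> * s)"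
    by (rule mult_mono[OF exp_le cosh_le]) auto
  finally have "besselK_laplace_integrand \<nu> y s \<le> exp ((\<bar>\<nu>\<bar> + 1)\<^sup>2 / 2) * exp (- s)"
    using quadratic by linarith
  moreover have "0 \<le> besselK_laplace_integrand \<nu> y s" by (simp add: besselK_laplace_integrand_def)
  ultimately show ?thesis using s by simp
qed

lemma tendsto_besselK_laplace_integrand:
  "((\<lambda>y. besselK_laplace_integrand \<nu> y s) \<longlongrightarrow> indicator {0..} s * exp (- s\<^sup>2)) at_top"
proof (cases "s > 0")
  case False
  then have "s \<le> 0" by simp
  then show ?thesis by (cases "s = 0") (simp_all add: besselK_laplace_integrand_def)
next
  case s: True
  have "((\<lambda>y. y * (cosh (sqrt (2/y) * s) - 1)) \<longlongrightarrow> s * (s * (2 powr (1/2) * 2 powr (1/2))) / 2) at_top"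
    using s unfolding cosh_field_def by real_asymp
  then have "((\<lambda>y. y * (cosh (sqrt (2/y) * s) - 1)) \<longlongrightarrow> s\<^sup>2) at_top"
    by (simp add: powr_add[symmetric] power2_eq_square)
  moreover have "((\<lambda>y. cosh (\<nu> * (sqrt (2/y) * s))) \<longlongrightarrow> cosh (\<nu> * (sqrt 0 * s))) at_top"
    by (intro tendsto_intros) real_asymp
  ultimately have "((\<lambda>y. exp (- (y * (cosh (sqrt (2/y) * s) - 1))) * cosh (\<nu> * (sqrt (2/y) * s)))
      \<longlongrightarrow> exp (- s\<^sup>2) * 1) at_top"
    by (intro tendsto_intros) simp_all
  then show ?thesis using s by (simp add: besselK_laplace_integrand_def)
qed

theorem besselK_asymptotics: "((\<lambda>y. sqrt y * exp y * besselK \<nu> y) \<longlongrightarrow> sqrt (pi/2)) at_top"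
proof -
  have "((\<lambda>y. \<integral>s. besselK_laplace_integrand \<nu> y s \<partial>lborel)
          \<longlongrightarrow> (\<integral>s. indicator {0..} s * exp (- s\<^sup>2) \<partial>lborel)) at_top"
  proof (rule integral_dominated_convergence_at_top
      [where w="\<lambda>s. exp ((\<bar>\<nu>\<bar> + 1)\<^sup>2 / 2) * (exp (- s) * indicator {0..} s)"])
    show "integrable lborel (\<lambda>s. exp ((\<bar>\<nu>\<bar> + 1)\<^sup>2 / 2) * (exp (- s) * indicator {0..} s))"
      using integrable_exp_minus_Ici by (rule integrable_mult_right)
    show "\<forall>\<^sub>F y in at_top. AE s in lborel.
            norm (besselK_laplace_integrand \<nu> y s) \<le> exp ((\<bar>\<nu>\<bar> + 1)\<^sup>2 / 2) * (exp (- s) * indicator {0..} s)"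
      using eventually_ge_at_top[of "2::real"]
      by eventually_elim (intro AE_I2 besselK_laplace_integrand_bound)
  qed (auto intro: tendsto_besselK_laplace_integrand)
  moreover have "(\<integral>s. indicator {0..} s * exp (- s\<^sup>2) \<partial>lborel) = sqrt pi / 2"
    using gaussian_moment_0 by (simp add: has_bochner_integral_iff)
  moreover have "sqrt 2 * (sqrt pi / 2) = sqrt (pi/2)"
    by (simp add: real_sqrt_divide field_simps)
  ultimately have "((\<lambda>y. sqrt 2 * (\<integral>s. besselK_laplace_integrand \<nu> y s \<partial>lborel)) \<longlongrightarrow> sqrt (pi/2)) at_top"
    by (metis tendsto_mult_left)
  then show ?thesis
    by (rule Lim_transform_eventually)
       (use eventually_gt_at_top[of "0::real"] in \<open>eventually_elim, simp add: besselK_eq_laplace_integral\<close>)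
qed

section \<open>Taylor expansion in the last variable\<close>

definition partial_snd :: "('a::euclidean_space \<times> real \<Rightarrow> real) \<Rightarrow> 'a \<times> real \<Rightarrow> real" where
  "partial_snd f p = frechet_derivative f (at p) (0, 1)"

lemma smooth_onD:
  "smooth_on U f \<Longrightarrow> open U \<and> f differentiable_on U \<and> (\<forall>v. smooth_on U (\<lambda>x. frechet_derivative f (at x) v))"
  by (erule smooth_on.cases) auto

lemma smooth_on_imp_open: "smooth_on U f \<Longrightarrow> open U"
  using smooth_onD[of U f] by blast

lemma smooth_on_imp_continuous_on: "smooth_on U f \<Longrightarrow> continuous_on U f"
  using smooth_onD[of U f] differentiable_imp_continuous_on by blast

lemma smooth_on_partial_snd: "smooth_on U f \<Longrightarrow> smooth_on U (partial_snd f)"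
  using smooth_onD[of U f] unfolding partial_snd_def by blast

lemma has_real_derivative_partial_snd:
  fixes f :: "'a::euclidean_space \<times> real \<Rightarrow> real"
  assumes "f differentiable (at (x, l))"
  shows "((\<lambda>t. f (x, t)) has_real_derivative partial_snd f (x, l)) (at l)"
proof -
  define D where "D = frechet_derivative f (at (x, l))"
  have f': "(f has_derivative D) (at (x, l))"
    using assms unfolding D_def by (simp add: frechet_derivative_works)
  have "((\<lambda>t. (x, t)) has_derivative (\<lambda>h. (0, h))) (at l)"
    by (auto intro!: derivative_eq_intros)
  from has_derivative_compose[OF this, simplified, OF f']
  have "((\<lambda>t. f (x, t)) has_derivative (\<lambda>h. D (0, h))) (at l)" .
  moreover have "(\<lambda>h. D (0, h)) = (*) (D (0, 1))"
  proof
    fix h :: real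
    have "D (h *\<^sub>R (0, 1)) = h *\<^sub>R D (0, 1)" by (rule linear_cmul[OF has_derivative_linear[OF f']])
    then show "D (0, h) = D (0, 1) * h" by (simp add: mult.commute)
  qed
  ultimately show ?thesis
    unfolding has_field_derivative_def partial_snd_def D_def[symmetric] by simp
qed

lemma smooth_on_has_real_derivative:
  "smooth_on U f \<Longrightarrow> (x, l) \<in> U \<Longrightarrow> ((\<lambda>t. f (x, t)) has_real_derivative partial_snd f (x, l)) (at l)"
  using smooth_onD[of U f]
  by (intro has_real_derivative_partial_snd) (auto simp: differentiable_on_eq_differentiable_at)

lemma smooth_on_deriv_eq_partial_snd:
  fixes f :: "'a::euclidean_space \<times> real \<Rightarrow> real"
  assumes f: "smooth_on U f" and x: "(x, l) \<in> U"
  shows "deriv (\<lambda>t. f (x, t)) l = partial_snd f (x, l)"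
    and "deriv (deriv (\<lambda>t. f (x, t))) l = partial_snd (partial_snd f) (x, l)"
proof -
  show "deriv (\<lambda>t. f (x, t)) l = partial_snd f (x, l)"
    by (rule DERIV_imp_deriv[OF smooth_on_has_real_derivative[OF f x]])
  define S where "S = (\<lambda>t. (x, t)) -` U"
  have S: "open S" "l \<in> S"
    using smooth_on_imp_open[OF f] x unfolding S_def
    by (auto intro!: continuous_open_vimage continuous_intros)
  have "((\<lambda>t. partial_snd f (x, t)) has_real_derivative partial_snd (partial_snd f) (x, l)) (at l)"
    by (rule smooth_on_has_real_derivative[OF smooth_on_partial_snd[OF f] x])
  then have "(deriv (\<lambda>t. f (x, t)) has_real_derivative partial_snd (partial_snd f) (x, l)) (at l)"
    by (rule has_field_derivative_transform_within_open[OF _ S])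
       (auto simp: S_def intro!: DERIV_imp_deriv[symmetric] smooth_on_has_real_derivative[OF f])
  then show "deriv (deriv (\<lambda>t. f (x, t))) l = partial_snd (partial_snd f) (x, l)"
    by (rule DERIV_imp_deriv)
qed

lemma smooth_on_Taylor2:
  fixes f :: "'a::euclidean_space \<times> real \<Rightarrow> real"
  assumes f: "smooth_on U f" and segment: "\<And>t. 0 \<le> t \<Longrightarrow> t \<le> h \<Longrightarrow> (x, t) \<in> U" and h: "h > 0"
  obtains \<xi> where "0 < \<xi>" "\<xi> < h"
    "f (x, h) = f (x, 0) + partial_snd f (x, 0) * h + partial_snd (partial_snd f) (x, \<xi>) / 2 * h\<^sup>2"
proof -
  define diff :: "nat \<Rightarrow> real \<Rightarrow> real" where
    "diff k = (if k = 0 then (\<lambda>t. f (x, t)) else if k = 1 then (\<lambda>t. partial_snd f (x, t))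
               else (\<lambda>t. partial_snd (partial_snd f) (x, t)))" for k
  have "\<exists>\<xi>. 0 < \<xi> \<and> \<xi> < h \<and>
      f (x, h) = (\<Sum>k<2. diff k 0 / fact k * h ^ k) + diff 2 \<xi> / fact 2 * h ^ 2"
  proof (rule Maclaurin[OF h])
    show "\<forall>k t. k < 2 \<and> 0 \<le> t \<and> t \<le> h \<longrightarrow> (diff k has_real_derivative diff (Suc k) t) (at t)"
    proof (intro allI impI)
      fix k :: nat and t :: real assume kt: "k < 2 \<and> 0 \<le> t \<and> t \<le> h"
      then have "(x, t) \<in> U" by (simp add: segment)
      moreover have "k = 0 \<or> k = 1" using kt by auto
      ultimately show "(diff k has_real_derivative diff (Suc k) t) (at t)"
        using smooth_on_has_real_derivative[OF f] smooth_on_has_real_derivative[OF smooth_on_partial_snd[OF f]]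
        by (auto simp: diff_def)
    qed
  qed (simp_all add: diff_def)
  then obtain \<xi> where "0 < \<xi>" "\<xi> < h"
    "f (x, h) = (\<Sum>k<2. diff k 0 / fact k * h ^ k) + diff 2 \<xi> / fact 2 * h ^ 2"
    by blast
  then show ?thesis
    by (intro that[of \<xi>]) (simp_all add: diff_def numeral_2_eq_2)
qed

lemma smooth_on_second_difference_quotient:
  fixes f :: "'a::euclidean_space \<times> real \<Rightarrow> real"
  assumes f: "smooth_on U f" and segment: "\<And>t. 0 \<le> t \<Longrightarrow> t \<le> h \<Longrightarrow> (x, t) \<in> U" and h: "h > 0"
    and flat: "partial_snd f (x, 0) = 0"
  obtains \<xi> where "0 < \<xi>" "\<xi> < h" "(f (x, h) - f (x, 0)) / h\<^sup>2 = partial_snd (partial_snd f) (x, \<xi>) / 2"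
proof -
  obtain \<xi> where "0 < \<xi>" "\<xi> < h"
    "f (x, h) = f (x, 0) + partial_snd f (x, 0) * h + partial_snd (partial_snd f) (x, \<xi>) / 2 * h\<^sup>2"
    using smooth_on_Taylor2[OF f segment h] by blast
  then show ?thesis
    using that h flat by simp
qed

lemma tendsto_second_difference_quotient:
  fixes f :: "'a::euclidean_space \<times> real \<Rightarrow> real"
  assumes f: "smooth_on U f" and segment: "\<And>t. 0 \<le> t \<Longrightarrow> t < l0 \<Longrightarrow> (x, t) \<in> U" and l0: "l0 > 0"
    and flat: "partial_snd f (x, 0) = 0"
  shows "((\<lambda>l. (f (x, l) - f (x, 0)) / l\<^sup>2) \<longlongrightarrow> partial_snd (partial_snd f) (x, 0) / 2) (at_right 0)"
proof -
  define f2 where "f2 = partial_snd (partial_snd f)"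
  have "\<forall>l \<in> {0<..<l0}. \<exists>\<xi>. 0 < \<xi> \<and> \<xi> < l \<and> (f (x, l) - f (x, 0)) / l\<^sup>2 = f2 (x, \<xi>) / 2"
  proof
    fix l assume l: "l \<in> {0<..<l0}"
    then show "\<exists>\<xi>. 0 < \<xi> \<and> \<xi> < l \<and> (f (x, l) - f (x, 0)) / l\<^sup>2 = f2 (x, \<xi>) / 2"
      using smooth_on_second_difference_quotient[OF f _ _ flat, of l] segment
      unfolding f2_def by (metis greaterThanLessThan_iff le_less_trans)
  qed
  then obtain \<xi> where \<xi>: "\<And>l. l \<in> {0<..<l0} \<Longrightarrow>
      0 < \<xi> l \<and> \<xi> l < l \<and> (f (x, l) - f (x, 0)) / l\<^sup>2 = f2 (x, \<xi> l) / 2"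
    by metis
  have ev: "eventually (\<lambda>l. l \<in> {0<..<l0}) (at_right 0)"
    using l0 by (auto simp: eventually_at_right_field)
  have "(\<xi> \<longlongrightarrow> 0) (at_right 0)"
    by (rule tendsto_sandwich[of "\<lambda>_. 0" _ _ "\<lambda>l. l"])
       (use ev \<xi> in \<open>auto elim!: eventually_mono intro: less_imp_le tendsto_ident_at\<close>)
  then have \<xi>_lim: "((\<lambda>l. (x, \<xi> l)) \<longlongrightarrow> (x, 0)) (at_right 0)"
    by (intro tendsto_intros)
  have "isCont f2 (x, 0)"
    using smooth_on_imp_continuous_on[OF smooth_on_partial_snd[OF smooth_on_partial_snd[OF f]]]
      smooth_on_imp_open[OF f] segment[of 0] l0
    unfolding f2_def by (simp add: continuous_on_eq_continuous_at)
  from isCont_tendsto_compose[OF this \<xi>_lim]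
  have "((\<lambda>l. f2 (x, \<xi> l) / 2) \<longlongrightarrow> f2 (x, 0) / 2) (at_right 0)"
    by (rule tendsto_divide) simp_all
  then show ?thesis
    unfolding f2_def[symmetric]
    by (rule Lim_transform_eventually) (use ev \<xi> in \<open>auto elim!: eventually_mono\<close>)
qed

lemma bounded_second_difference_quotient:
  fixes f :: "'a::euclidean_space \<times> real \<Rightarrow> real"
  assumes f: "smooth_on U f" and K: "compact K" and KU: "K \<times> {0..<l0} \<subseteq> U" and l0: "l0 > 0"
    and flat: "\<And>x. x \<in> K \<Longrightarrow> partial_snd f (x, 0) = 0"
  obtains M where "\<And>x l. x \<in> K \<Longrightarrow> 0 < l \<Longrightarrow> l \<le> l0/2 \<Longrightarrow> \<bar>(f (x, l) - f (x, 0)) / l\<^sup>2\<bar> \<le> M"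
proof -
  define f2 where "f2 = partial_snd (partial_snd f)"
  have "compact (K \<times> {0..l0/2})" using K by (intro compact_Times) auto
  moreover have "continuous_on (K \<times> {0..l0/2}) f2"
    unfolding f2_def
    by (rule continuous_on_subset[OF smooth_on_imp_continuous_on[OF smooth_on_partial_snd[OF smooth_on_partial_snd[OF f]]]])
       (use KU l0 in auto)
  ultimately have "bounded (f2 ` (K \<times> {0..l0/2}))"
    by (intro compact_imp_bounded compact_continuous_image)
  then obtain B where B: "\<And>p. p \<in> K \<times> {0..l0/2} \<Longrightarrow> \<bar>f2 p\<bar> \<le> B"
    unfolding bounded_iff by auto
  show ?thesis
  proof (rule that[of "B/2"])
    fix x l assume x: "x \<in> K" and l: "0 < l" "l \<le> l0/2"
    have "\<And>t. 0 \<le> t \<Longrightarrow> t \<le> l \<Longrightarrow> (x, t) \<in> U" using KU x l l0 by auto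
    then obtain \<xi> where \<xi>: "0 < \<xi>" "\<xi> < l" and eq: "(f (x, l) - f (x, 0)) / l\<^sup>2 = f2 (x, \<xi>) / 2"
      unfolding f2_def using l(1) flat[OF x] by (rule smooth_on_second_difference_quotient[OF f])
    have "\<bar>(f (x, l) - f (x, 0)) / l\<^sup>2\<bar> = \<bar>f2 (x, \<xi>)\<bar> / 2" unfolding eq by simp
    also have "\<dots> \<le> B/2" using B[of "(x, \<xi>)"] x \<xi> l by simp
    finally show "\<bar>(f (x, l) - f (x, 0)) / l\<^sup>2\<bar> \<le> B/2" .
  qed
qed

lemma compact_continuous_pos_lower_bound:
  fixes f :: "'a::topological_space \<Rightarrow> real"
  assumes "compact S" "continuous_on S f" "\<And>x. x \<in> S \<Longrightarrow> 0 < f x"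
  obtains a where "0 < a" "\<And>x. x \<in> S \<Longrightarrow> a \<le> f x"
proof (cases "S = {}")
  case True
  then show ?thesis using that[of 1] by simp
next
  case False
  then obtain x0 where "x0 \<in> S" "\<And>x. x \<in> S \<Longrightarrow> f x0 \<le> f x"
    using continuous_attains_inf[OF assms(1) False assms(2)] by blast
  then show ?thesis using that[of "f x0"] assms(3) by blast
qed

lemma continuous_on_bounded_integrable_on:
  fixes f :: "'a::euclidean_space \<Rightarrow> real"
  assumes "continuous_on S f" "S \<in> lmeasurable" "\<And>x. x \<in> S \<Longrightarrow> \<bar>f x\<bar> \<le> B"
  shows "f integrable_on S"
proof (rule measurable_bounded_by_integrable_imp_integrable_real[where g="\<lambda>_. B"])
  show S: "S \<in> sets lebesgue" using assms(2) by (rule fmeasurableD)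
  show "f \<in> borel_measurable (lebesgue_on S)" by (rule continuous_imp_measurable_on_sets_lebesgue[OF assms(1) S])
  show "(\<lambda>_. B) integrable_on S" by (rule integrable_on_const[OF assms(2)])
qed (rule assms(3))

lemma integral_pos_if_continuous_on_closure:
  fixes f :: "'a::euclidean_space \<Rightarrow> real"
  assumes S: "bounded S" "open S" "S \<noteq> {}"
    and f: "continuous_on (closure S) f" "\<And>x. x \<in> closure S \<Longrightarrow> 0 < f x"
  shows "0 < integral S f"
proof -
  have S_meas: "S \<in> lmeasurable" using S by (simp add: lmeasurable_open)
  have compact: "compact (closure S)" using S by (simp add: compact_closure)
  obtain b where b: "0 < b" "\<And>x. x \<in> closure S \<Longrightarrow> b \<le> f x"
    using compact_continuous_pos_lower_bound[OF compact f] by blast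
  obtain B where B: "\<And>x. x \<in> closure S \<Longrightarrow> \<bar>f x\<bar> \<le> B"
    using compact_imp_bounded[OF compact_continuous_image[OF f(1) compact]]
    unfolding bounded_iff by auto
  have "f integrable_on S"
    using continuous_on_subset[OF f(1) closure_subset] S_meas B closure_subset
    by (intro continuous_on_bounded_integrable_on) auto
  then have "integral S (\<lambda>_. b) \<le> integral S f"
    using S_meas b closure_subset by (intro integral_le integrable_on_const) auto
  moreover have "integral S (\<lambda>_. b) = b * measure lebesgue S"
    using lmeasure_integral[OF S_meas] integral_mult_right[of S b "\<lambda>_. 1"] by simp
  moreover have "0 < measure lebesgue S"
  proof -
    obtain x0 r where r: "0 < r" "ball x0 r \<subseteq> S"
      using S open_contains_ball by blast
    have "0 < measure lebesgue (ball x0 r)" using content_ball_pos[OF r(1)] by simp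
    also have "\<dots> \<le> measure lebesgue S" using r S_meas by (intro measure_mono_fmeasurable) auto
    finally show ?thesis .
  qed
  ultimately show ?thesis using b(1) by (metis mult_pos_pos order_less_le_trans)
qed

lemma tendsto_integral_at_right_dominated:
  fixes f :: "real \<Rightarrow> 'a::euclidean_space \<Rightarrow> real"
  assumes S: "S \<in> lmeasurable" and a: "a < b"
    and f_int: "\<And>t. a < t \<Longrightarrow> t < b \<Longrightarrow> f t integrable_on S"
    and f_bound: "\<And>t x. a < t \<Longrightarrow> t < b \<Longrightarrow> x \<in> S \<Longrightarrow> \<bar>f t x\<bar> \<le> B"
    and f_lim: "\<And>x. x \<in> S \<Longrightarrow> ((\<lambda>t. f t x) \<longlongrightarrow> g x) (at_right a)"
  shows "((\<lambda>t. integral S (f t)) \<longlongrightarrow> integral S g) (at_right a)"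
proof (rule tendsto_at_right_sequentially[OF a])
  fix T :: "nat \<Rightarrow> real" assume T: "\<And>n. a < T n" "\<And>n. T n < b" "T \<longlonglongrightarrow> a"
  have T_filterlim: "filterlim T (at_right a) sequentially"
    using T by (intro tendsto_imp_filterlim_at_right) (auto intro: always_eventually)
  show "(\<lambda>n. integral S (f (T n))) \<longlonglongrightarrow> integral S g"
  proof (rule dominated_convergence(2)[where h="\<lambda>_. B"])
    show "(\<lambda>_. B) integrable_on S" by (rule integrable_on_const[OF S])
    show "(\<lambda>n. f (T n) x) \<longlonglongrightarrow> g x" if "x \<in> S" for x
      by (rule filterlim_compose[OF f_lim[OF that] T_filterlim])
  qed (use T f_int f_bound in auto)
qed

section \<open>The one-particle relativistic partition function\<close>

text \<open>The integrand of the one-particle partition function at a point where \<open>\<alpha>\<close> takes the value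
  \<open>a\<close>; with \<open>lam = 1/c\<close>, \<open>\<beta> m / lam\<^sup>2\<close> is \<open>\<beta> m c\<^sup>2\<close>.\<close>

definition juttner_density :: "real \<Rightarrow> real \<Rightarrow> real \<Rightarrow> real \<Rightarrow> real \<Rightarrow> real" where
  "juttner_density m hbar \<beta> lam a = 4 * pi * (m / (2 * pi * hbar * lam)) ^ 3 * exp (\<beta> * m / lam\<^sup>2) *
     (besselK 2 (a * \<beta> * m / lam\<^sup>2) / (a * \<beta> * m / lam\<^sup>2))"

lemma juttner_density_eq:
  assumes a: "0 < a" and lam: "0 < lam" and c: "0 < \<beta> * m"
  shows "juttner_density m hbar \<beta> lam a =
    4 * pi * (m / (2 * pi * hbar)) ^ 3
    * (sqrt (a * \<beta> * m / lam\<^sup>2) * exp (a * \<beta> * m / lam\<^sup>2) * besselK 2 (a * \<beta> * m / lam\<^sup>2))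
    * exp (- (\<beta> * m) * ((a - 1) / lam\<^sup>2)) / ((\<beta> * m) * a * sqrt ((\<beta> * m) * a))"
proof -
  define K where "K = besselK 2 (a * \<beta> * m / lam\<^sup>2)"
  have sqrt_eq: "sqrt (a * \<beta> * m / lam\<^sup>2) = sqrt ((\<beta> * m) * a) / lam"
    using lam by (simp add: real_sqrt_divide mult_ac)
  have exp_eq: "exp (a * \<beta> * m / lam\<^sup>2) * exp (- (\<beta> * m) * ((a - 1) / lam\<^sup>2)) = exp (\<beta> * m / lam\<^sup>2)"
    unfolding mult_exp_exp using lam by (simp add: field_simps)
  have "0 < sqrt ((\<beta> * m) * a)" using a c by simp
  moreover have "sqrt ((\<beta> * m) * a) * sqrt ((\<beta> * m) * a) = (\<beta> * m) * a" using a c by simp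
  ultimately show ?thesis
    unfolding juttner_density_def K_def[symmetric] sqrt_eq
    using exp_eq a lam c by (simp add: field_simps power3_eq_cube power2_eq_square)
qed

lemma thermal_prefactor_eq:
  fixes m \<beta> hbar :: real
  assumes m: "m > 0" and \<beta>: "\<beta> > 0" and hbar: "hbar > 0"
  shows "4 * pi * (m / (2 * pi * hbar)) ^ 3 * sqrt (pi/2) / ((\<beta> * m) * sqrt (\<beta> * m))
       = (m / (2 * pi * hbar\<^sup>2 * \<beta>)) powr (3/2)"
proof -
  define P where "P = m / (2 * pi * hbar\<^sup>2 * \<beta>)"
  have P: "P > 0" using m \<beta> hbar by (simp add: P_def)
  have "P powr (3/2) = P powr (1 + 1/2)" by simp
  also have "\<dots> = P powr 1 * P powr (1/2)" by (rule powr_add)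
  also have "\<dots> = P * sqrt P" using P by (simp add: powr_half_sqrt)
  finally have powr_eq: "P powr (3/2) = P * sqrt P" .
  have sqrt_P: "sqrt P = sqrt m / (sqrt 2 * sqrt pi * hbar * sqrt \<beta>)"
    using hbar unfolding P_def by (simp add: real_sqrt_divide real_sqrt_mult)
  have "4 * (sqrt pi)\<^sup>2 * ((sqrt m)\<^sup>2 / (2 * (sqrt pi)\<^sup>2 * hbar)) ^ 3 * (sqrt pi / sqrt 2)
          / ((sqrt \<beta>)\<^sup>2 * (sqrt m)\<^sup>2 * (sqrt \<beta> * sqrt m))
      = (sqrt m)\<^sup>2 / (2 * (sqrt pi)\<^sup>2 * hbar\<^sup>2 * (sqrt \<beta>)\<^sup>2) * (sqrt m / (sqrt 2 * sqrt pi * hbar * sqrt \<beta>))"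
    using m \<beta> hbar by (simp add: field_simps power2_eq_square power3_eq_cube)
  then show ?thesis
    using m \<beta>
    unfolding P_def[symmetric] powr_eq sqrt_P
    by (simp add: P_def real_sqrt_divide real_sqrt_mult mult_ac)
qed

lemma continuous_on_juttner_density:
  assumes c: "0 < \<beta> * m" and lam: "lam \<noteq> 0"
  shows "continuous_on {0<..} (juttner_density m hbar \<beta> lam)"
proof -
  have pos: "0 < a * \<beta> * m / lam\<^sup>2" if "a \<in> {0<..}" for a
    using that c lam by (simp add: mult.assoc)
  have "continuous_on {0<..} (\<lambda>a. besselK 2 (a * \<beta> * m / lam\<^sup>2))"
    by (rule continuous_on_compose2[OF continuous_on_besselK]) (use lam in \<open>auto intro!: continuous_intros pos\<close>)
  then show ?thesis
    unfolding juttner_density_def using c lam by (auto intro!: continuous_intros)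
qed

lemma tendsto_juttner_density:
  fixes a :: "real \<Rightarrow> real"
  assumes \<beta>: "0 < \<beta>" and m: "0 < m" and hbar: "0 < hbar"
    and a_lim: "(a \<longlongrightarrow> 1) (at_right 0)" and q: "((\<lambda>l. (a l - 1) / l\<^sup>2) \<longlongrightarrow> q) (at_right 0)"
  shows "((\<lambda>l. juttner_density m hbar \<beta> l (a l))
           \<longlongrightarrow> (m / (2 * pi * hbar\<^sup>2 * \<beta>)) powr (3/2) * exp (- (\<beta> * m) * q)) (at_right 0)"
proof -
  define c where "c = \<beta> * m"
  have c: "0 < c" using \<beta> m by (simp add: c_def)
  define A where "A = 4 * pi * (m / (2 * pi * hbar)) ^ 3"
  define \<gamma> where "\<gamma> l = a l * \<beta> * m / l\<^sup>2" for l
  have lim: "((\<lambda>l. a l * \<beta> * m) \<longlongrightarrow> \<beta> * m) (at_right 0)"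
    using tendsto_mult_right[OF tendsto_mult_right[OF a_lim, of \<beta>], of m] by simp
  have inv: "filterlim (\<lambda>l::real. 1 / l\<^sup>2) at_top (at_right 0)" by real_asymp
  have "filterlim (\<lambda>l. a l * \<beta> * m * (1 / l\<^sup>2)) at_top (at_right 0)"
    using filterlim_tendsto_pos_mult_at_top[OF lim _ inv] c by (simp add: c_def)
  then have "filterlim \<gamma> at_top (at_right 0)" by (simp add: \<gamma>_def[abs_def])
  from filterlim_compose[OF besselK_asymptotics this]
  have "((\<lambda>l. sqrt (\<gamma> l) * exp (\<gamma> l) * besselK 2 (\<gamma> l)) \<longlongrightarrow> sqrt (pi/2)) (at_right 0)" .
  then have lim: "((\<lambda>l. A * (sqrt (\<gamma> l) * exp (\<gamma> l) * besselK 2 (\<gamma> l)) * exp (- c * ((a l - 1) / l\<^sup>2))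
                / (c * a l * sqrt (c * a l)))
         \<longlongrightarrow> A * sqrt (pi/2) * exp (- c * q) / (c * 1 * sqrt (c * 1))) (at_right 0)"
    by (intro tendsto_intros a_lim q) (use c in simp_all)
  have "eventually (\<lambda>l. 0 < a l) (at_right 0)" using a_lim by (rule order_tendstoD(1)) simp
  then have "eventually (\<lambda>l. 0 < a l \<and> 0 < l) (at_right 0)"
    using eventually_at_right_less[of 0] by (rule eventually_conj)
  then have "eventually (\<lambda>l. A * (sqrt (\<gamma> l) * exp (\<gamma> l) * besselK 2 (\<gamma> l)) * exp (- c * ((a l - 1) / l\<^sup>2))
                / (c * a l * sqrt (c * a l)) = juttner_density m hbar \<beta> l (a l)) (at_right 0)"
    by (rule eventually_mono) (use c in \<open>simp add: juttner_density_eq A_def c_def \<gamma>_def\<close>)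
  from Lim_transform_eventually[OF lim this] show ?thesis
    unfolding thermal_prefactor_eq[OF m \<beta> hbar, symmetric] A_def c_def by (simp add: ac_simps)
qed

lemma juttner_density_bounded:
  assumes \<beta>: "0 < \<beta>" and m: "0 < m" and hbar: "0 < hbar" and a0: "0 < a0"
  obtains l W where "0 < l"
    "\<And>lam a. 0 < lam \<Longrightarrow> lam < l \<Longrightarrow> a0 \<le> a \<Longrightarrow> - ((a - 1) / lam\<^sup>2) \<le> M \<Longrightarrow>
       \<bar>juttner_density m hbar \<beta> lam a\<bar> \<le> W"
proof -
  define c where "c = \<beta> * m"
  have c: "0 < c" using \<beta> m by (simp add: c_def)
  define A where "A = 4 * pi * (m / (2 * pi * hbar)) ^ 3"
  have A: "0 < A" using m hbar by (simp add: A_def)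
  define \<phi> where "\<phi> y = sqrt y * exp y * besselK 2 y" for y
  have "eventually (\<lambda>y. \<phi> y < sqrt (pi/2) + 1) at_top"
    using besselK_asymptotics[of 2] unfolding \<phi>_def[symmetric] by (intro order_tendstoD(2)) auto
  then obtain \<Gamma>0 where \<Gamma>0: "\<And>y. \<Gamma>0 \<le> y \<Longrightarrow> \<phi> y < sqrt (pi/2) + 1"
    unfolding eventually_at_top_linorder by blast
  define \<Gamma> where "\<Gamma> = max \<Gamma>0 1"
  have \<Gamma>: "0 < \<Gamma>" "\<Gamma>0 \<le> \<Gamma>" by (auto simp: \<Gamma>_def)
  show ?thesis
  proof (rule that)
    \<comment> \<open>For \<open>lam < sqrt (c a0 / \<Gamma>)\<close> the Bessel argument \<open>y\<close> exceeds \<open>\<Gamma>\<close>.\<close>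
    show "0 < sqrt (c * a0 / \<Gamma>)" using c a0 \<Gamma> by simp
    fix lam a assume lam: "0 < lam" "lam < sqrt (c * a0 / \<Gamma>)" and a: "a0 \<le> a"
      and q: "- ((a - 1) / lam\<^sup>2) \<le> M"
    define y where "y = a * \<beta> * m / lam\<^sup>2"
    have "lam\<^sup>2 < (sqrt (c * a0 / \<Gamma>))\<^sup>2" using lam by (intro power_strict_mono) auto
    then have "lam\<^sup>2 < c * a0 / \<Gamma>" using c a0 \<Gamma> by simp
    then have "\<Gamma> * lam\<^sup>2 < c * a0" using \<Gamma> by (simp add: field_simps)
    also have "\<dots> \<le> c * a" using c a by simp
    finally have "\<Gamma> \<le> y" using lam by (simp add: y_def c_def field_simps)
    then have \<phi>_le: "\<phi> y \<le> sqrt (pi/2) + 1" using \<Gamma>0[of y] \<Gamma> by simp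
    have \<phi>_ge: "0 \<le> \<phi> y" using \<open>\<Gamma> \<le> y\<close> \<Gamma> besselK_nonneg[of y 2] by (simp add: \<phi>_def)
    have "c * (- ((a - 1) / lam\<^sup>2)) \<le> c * M" using q c by (intro mult_left_mono) auto
    then have E: "exp (- c * ((a - 1) / lam\<^sup>2)) \<le> exp (c * M)" by simp
    have D: "c * a0 * sqrt (c * a0) \<le> c * a * sqrt (c * a)"
      using a c a0 by (intro mult_mono) auto
    have "juttner_density m hbar \<beta> lam a = A * \<phi> y * exp (- c * ((a - 1) / lam\<^sup>2)) / (c * a * sqrt (c * a))"
      using a a0 lam c unfolding A_def \<phi>_def y_def c_def by (simp add: juttner_density_eq)
    moreover have "A * \<phi> y * exp (- c * ((a - 1) / lam\<^sup>2)) \<le> A * (sqrt (pi/2) + 1) * exp (c * M)"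
      using A \<phi>_le \<phi>_ge E by (intro mult_mono) auto
    ultimately show "\<bar>juttner_density m hbar \<beta> lam a\<bar> \<le> A * (sqrt (pi/2) + 1) * exp (c * M) / (c * a0 * sqrt (c * a0))"
      using A \<phi>_ge D c a0 a by (auto intro!: frac_le)
  qed
qed

section \<open>The limit of the partition function\<close>

lemma tendsto_juttner_density_deformation:
  fixes \<alpha> :: "'a::euclidean_space \<times> real \<Rightarrow> real"
  assumes params: "0 < \<beta>" "0 < m" "0 < hbar"
    and \<alpha>: "smooth_on U \<alpha>" and segment: "\<And>t. 0 \<le> t \<Longrightarrow> t < lam0 \<Longrightarrow> (x, t) \<in> U" and lam0: "0 < lam0"
    and init: "\<alpha> (x, 0) = 1" and flat: "partial_snd \<alpha> (x, 0) = 0"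
  shows "((\<lambda>lam. juttner_density m hbar \<beta> lam (\<alpha> (x, lam)))
           \<longlongrightarrow> (m / (2 * pi * hbar\<^sup>2 * \<beta>)) powr (3/2) * exp (- (\<beta> * m) * (partial_snd (partial_snd \<alpha>) (x, 0) / 2)))
         (at_right 0)"
proof (rule tendsto_juttner_density[OF params])
  have "isCont \<alpha> (x, 0)"
    using smooth_on_imp_continuous_on[OF \<alpha>] smooth_on_imp_open[OF \<alpha>] segment[of 0] lam0
    by (simp add: continuous_on_eq_continuous_at)
  moreover have "((\<lambda>l. (x, l)) \<longlongrightarrow> (x, 0)) (at_right 0)" by (intro tendsto_intros)
  ultimately show "((\<lambda>l. \<alpha> (x, l)) \<longlongrightarrow> 1) (at_right 0)"
    using isCont_tendsto_compose init by fastforce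
  show "((\<lambda>l. (\<alpha> (x, l) - 1) / l\<^sup>2) \<longlongrightarrow> partial_snd (partial_snd \<alpha>) (x, 0) / 2) (at_right 0)"
    using tendsto_second_difference_quotient[OF \<alpha> segment lam0 flat] init by simp
qed

lemma juttner_density_deformation_bounded:
  fixes \<alpha> :: "'a::euclidean_space \<times> real \<Rightarrow> real"
  assumes K: "compact K" and params: "0 < \<beta>" "0 < m" "0 < hbar" "0 < lam0"
    and \<alpha>: "smooth_on U \<alpha>" "K \<times> {0..<lam0} \<subseteq> U"
    and pos: "\<And>x l. x \<in> K \<Longrightarrow> 0 \<le> l \<Longrightarrow> l < lam0 \<Longrightarrow> 0 < \<alpha> (x, l)"
    and init: "\<And>x. x \<in> K \<Longrightarrow> \<alpha> (x, 0) = 1"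
    and flat: "\<And>x. x \<in> K \<Longrightarrow> partial_snd \<alpha> (x, 0) = 0"
  obtains l W where "0 < l" "l < lam0"
    "\<And>x lam. x \<in> K \<Longrightarrow> 0 < lam \<Longrightarrow> lam < l \<Longrightarrow> \<bar>juttner_density m hbar \<beta> lam (\<alpha> (x, lam))\<bar> \<le> W"
proof -
  obtain M where M: "\<And>x l. x \<in> K \<Longrightarrow> 0 < l \<Longrightarrow> l \<le> lam0/2 \<Longrightarrow> \<bar>(\<alpha> (x, l) - \<alpha> (x, 0)) / l\<^sup>2\<bar> \<le> M"
    using bounded_second_difference_quotient[OF \<alpha>(1) K \<alpha>(2) params(4) flat] by blast
  have "continuous_on (K \<times> {0..lam0/2}) \<alpha>"
    by (rule continuous_on_subset[OF smooth_on_imp_continuous_on[OF \<alpha>(1)]]) (use \<alpha>(2) params(4) in auto)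
  moreover have "0 < \<alpha> p" if "p \<in> K \<times> {0..lam0/2}" for p
    using that pos params(4) by auto
  ultimately obtain a0 where a0: "0 < a0" "\<And>p. p \<in> K \<times> {0..lam0/2} \<Longrightarrow> a0 \<le> \<alpha> p"
    using compact_continuous_pos_lower_bound[OF compact_Times[OF K compact_Icc]] by blast
  obtain l W where l: "0 < l" and W: "\<And>lam a. 0 < lam \<Longrightarrow> lam < l \<Longrightarrow> a0 \<le> a \<Longrightarrow>
      - ((a - 1) / lam\<^sup>2) \<le> M \<Longrightarrow> \<bar>juttner_density m hbar \<beta> lam a\<bar> \<le> W"
    using juttner_density_bounded[OF params(1-3) a0(1)] by blast
  show ?thesis
  proof (rule that[of "min l (lam0/2)" W])
    show "0 < min l (lam0/2)" "min l (lam0/2) < lam0" using l params(4) by auto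
    fix x lam assume x: "x \<in> K" and lam: "0 < lam" "lam < min l (lam0/2)"
    show "\<bar>juttner_density m hbar \<beta> lam (\<alpha> (x, lam))\<bar> \<le> W"
    proof (rule W)
      show "0 < lam" "lam < l" using lam by auto
      show "a0 \<le> \<alpha> (x, lam)" using a0(2)[of "(x, lam)"] x lam by simp
      have "\<bar>(\<alpha> (x, lam) - 1) / lam\<^sup>2\<bar> \<le> M" using M[of x lam] x lam init[OF x] by simp
      then show "- ((\<alpha> (x, lam) - 1) / lam\<^sup>2) \<le> M" unfolding abs_le_iff by blast
    qed
  qed
qed

lemma tendsto_integral_juttner_density:
  fixes V :: "'a::euclidean_space set" and \<alpha> :: "'a \<times> real \<Rightarrow> real"
  assumes V: "bounded V" "open V"
    and params: "0 < \<beta>" "0 < m" "0 < hbar" "0 < lam0"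
    and \<alpha>: "smooth_on U \<alpha>" "closure V \<times> {0..<lam0} \<subseteq> U"
    and pos: "\<And>x l. x \<in> closure V \<Longrightarrow> 0 \<le> l \<Longrightarrow> l < lam0 \<Longrightarrow> 0 < \<alpha> (x, l)"
    and init: "\<And>x. x \<in> closure V \<Longrightarrow> \<alpha> (x, 0) = 1"
    and flat: "\<And>x. x \<in> closure V \<Longrightarrow> partial_snd \<alpha> (x, 0) = 0"
  shows "((\<lambda>lam. integral V (\<lambda>x. juttner_density m hbar \<beta> lam (\<alpha> (x, lam))))
           \<longlongrightarrow> integral V (\<lambda>x. (m / (2 * pi * hbar\<^sup>2 * \<beta>)) powr (3/2)
                                   * exp (- (\<beta> * m) * (partial_snd (partial_snd \<alpha>) (x, 0) / 2))))
         (at_right 0)"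
proof -
  have Vc: "x \<in> closure V" if "x \<in> V" for x using that closure_subset by blast
  have segment: "(x, l) \<in> U" if "x \<in> closure V" "0 \<le> l" "l < lam0" for x l
    using \<alpha>(2) that by auto
  obtain l W where l: "0 < l" "l < lam0" and W: "\<And>x lam. x \<in> closure V \<Longrightarrow> 0 < lam \<Longrightarrow> lam < l \<Longrightarrow>
      \<bar>juttner_density m hbar \<beta> lam (\<alpha> (x, lam))\<bar> \<le> W"
    using juttner_density_deformation_bounded[OF _ params \<alpha> pos init flat] V(1) compact_closure by blast
  show ?thesis
  proof (rule tendsto_integral_at_right_dominated[OF _ l(1)])
    show V_meas: "V \<in> lmeasurable" using V by (simp add: lmeasurable_open)
    fix lam assume lam: "0 < lam" "lam < l"
    have "continuous_on V (\<lambda>x. \<alpha> (x, lam))"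
      by (rule continuous_on_compose2[OF smooth_on_imp_continuous_on[OF \<alpha>(1)]])
         (use Vc lam l segment in \<open>auto intro!: continuous_intros\<close>)
    then have "continuous_on V (\<lambda>x. juttner_density m hbar \<beta> lam (\<alpha> (x, lam)))"
      using continuous_on_juttner_density[of \<beta> m lam hbar] params lam
      by (intro continuous_on_compose2[OF _ \<open>continuous_on V (\<lambda>x. \<alpha> (x, lam))\<close>])
         (use Vc lam l pos in auto)
    then show "(\<lambda>x. juttner_density m hbar \<beta> lam (\<alpha> (x, lam))) integrable_on V"
      using V_meas W Vc lam by (intro continuous_on_bounded_integrable_on) auto
  next
    show "\<bar>juttner_density m hbar \<beta> lam (\<alpha> (x, lam))\<bar> \<le> W" if "0 < lam" "lam < l" "x \<in> V" for x lam
      using W Vc that by blast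
    show "((\<lambda>lam. juttner_density m hbar \<beta> lam (\<alpha> (x, lam)))
        \<longlongrightarrow> (m / (2 * pi * hbar\<^sup>2 * \<beta>)) powr (3/2) * exp (- (\<beta> * m) * (partial_snd (partial_snd \<alpha>) (x, 0) / 2)))
        (at_right 0)" if "x \<in> V" for x
      using Vc[OF that] segment params
      by (intro tendsto_juttner_density_deformation[OF params(1-3) \<alpha>(1) _ params(4) init flat]) auto
  qed
qed

lemma tendsto_partition_integral:
  fixes V :: "'a::euclidean_space set" and \<alpha> :: "'a \<times> real \<Rightarrow> real"
  assumes V: "bounded V" "open V"
    and params: "0 < \<beta>" "0 < m" "0 < hbar" "0 < lam0"
    and \<alpha>: "smooth_on U \<alpha>" "closure V \<times> {0..<lam0} \<subseteq> U"
    and pos: "\<And>x l. x \<in> closure V \<Longrightarrow> 0 \<le> l \<Longrightarrow> l < lam0 \<Longrightarrow> 0 < \<alpha> (x, l)"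
    and init: "\<And>x. x \<in> closure V \<Longrightarrow> \<alpha> (x, 0) = 1"
    and init_deriv: "\<And>x. x \<in> closure V \<Longrightarrow> deriv (\<lambda>l. \<alpha> (x, l)) 0 = 0"
  shows "((\<lambda>lam. 4 * pi * (m / (2 * pi * hbar * lam)) ^ 3 * exp (\<beta> * m / lam\<^sup>2) *
            integral V (\<lambda>x. besselK 2 (\<alpha> (x, lam) * \<beta> * m / lam\<^sup>2) / (\<alpha> (x, lam) * \<beta> * m / lam\<^sup>2)))
         \<longlongrightarrow> (m / (2 * pi * hbar\<^sup>2 * \<beta>)) powr (3/2) *
               integral V (\<lambda>x. exp (- (1/2) * \<beta> * m * deriv (deriv (\<lambda>l. \<alpha> (x, l))) 0)))
         (at_right 0)"
proof -
  have U0: "(x, 0) \<in> U" if "x \<in> closure V" for x using \<alpha>(2) that params(4) by auto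
  have d2: "deriv (deriv (\<lambda>l. \<alpha> (x, l))) 0 = partial_snd (partial_snd \<alpha>) (x, 0)" if "x \<in> V" for x
    using smooth_on_deriv_eq_partial_snd(2)[OF \<alpha>(1) U0] that closure_subset by blast
  have flat: "partial_snd \<alpha> (x, 0) = 0" if "x \<in> closure V" for x
    using smooth_on_deriv_eq_partial_snd(1)[OF \<alpha>(1) U0[OF that]] init_deriv[OF that] by simp
  have juttner_eq: "4 * pi * (m / (2 * pi * hbar * lam)) ^ 3 * exp (\<beta> * m / lam\<^sup>2) *
      integral V (\<lambda>x. besselK 2 (\<alpha> (x, lam) * \<beta> * m / lam\<^sup>2) / (\<alpha> (x, lam) * \<beta> * m / lam\<^sup>2))
      = integral V (\<lambda>x. juttner_density m hbar \<beta> lam (\<alpha> (x, lam)))" for lam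
    unfolding juttner_density_def by (rule integral_mult_right[symmetric])
  have integral_eq: "integral V (\<lambda>x. exp (- (\<beta> * m) * (partial_snd (partial_snd \<alpha>) (x, 0) / 2)))
      = integral V (\<lambda>x. exp (- (1/2) * \<beta> * m * deriv (deriv (\<lambda>l. \<alpha> (x, l))) 0))"
    by (intro integral_cong) (simp add: d2)
  show ?thesis
    using tendsto_integral_juttner_density[OF V params \<alpha> pos init flat]
    unfolding juttner_eq integral_mult_right integral_eq .
qed

lemma integral_exp_second_deriv_pos:
  fixes V :: "'a::euclidean_space set" and \<alpha> :: "'a \<times> real \<Rightarrow> real"
  assumes V: "bounded V" "open V" "V \<noteq> {}"
    and \<alpha>: "smooth_on U \<alpha>" "\<And>x. x \<in> closure V \<Longrightarrow> (x, 0) \<in> U"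
  shows "0 < integral V (\<lambda>x. exp (c * deriv (deriv (\<lambda>l. \<alpha> (x, l))) 0))"
proof -
  have "continuous_on (closure V) (\<lambda>x. partial_snd (partial_snd \<alpha>) (x, 0))"
    by (rule continuous_on_compose2[OF smooth_on_imp_continuous_on[OF smooth_on_partial_snd[OF smooth_on_partial_snd[OF \<alpha>(1)]]]])
       (use \<alpha>(2) in \<open>auto intro!: continuous_intros\<close>)
  then have "0 < integral V (\<lambda>x. exp (c * partial_snd (partial_snd \<alpha>) (x, 0)))"
    using V by (intro integral_pos_if_continuous_on_closure continuous_intros) auto
  also have "\<dots> = integral V (\<lambda>x. exp (c * deriv (deriv (\<lambda>l. \<alpha> (x, l))) 0))"
  proof (intro integral_cong)
    fix x assume "x \<in> V"
    then have "(x, 0) \<in> U" using \<alpha>(2) closure_subset by blast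
    then show "exp (c * partial_snd (partial_snd \<alpha>) (x, 0)) = exp (c * deriv (deriv (\<lambda>l. \<alpha> (x, l))) 0)"
      by (simp add: smooth_on_deriv_eq_partial_snd(2)[OF \<alpha>(1)])
  qed
  finally show ?thesis .
qed

theorem mainTheorem3:
  fixes V :: "(real^3) set"
    and \<alpha> :: "(real^3) \<times> real \<Rightarrow> real"
    and \<beta> m hbar lam0 :: real
    and N :: nat
  assumes V_region: "bounded V" "open V" "connected V"
    and params: "\<beta> > 0" "m > 0" "hbar > 0" "N \<ge> 1" "lam0 > 0"
    and smooth: "\<exists>U. open U \<and> closure V \<times> {0..<lam0} \<subseteq> U \<and> smooth_on U \<alpha>"
    and pos: "\<And>x l. x \<in> closure V \<Longrightarrow> 0 \<le> l \<Longrightarrow> l < lam0 \<Longrightarrow> \<alpha> (x, l) > 0"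
    and init: "\<And>x. x \<in> closure V \<Longrightarrow> \<alpha> (x, 0) = 1"
    and init_deriv: "\<And>x. x \<in> closure V \<Longrightarrow> deriv (\<lambda>l. \<alpha> (x, l)) 0 = 0"
  shows
    "((\<lambda>lam. - (1 / \<beta>) * ln ((1 / fact N) *
         (4 * pi * (m / (2 * pi * hbar * lam)) ^ 3 * exp (\<beta> * m / lam\<^sup>2) *
          integral V (\<lambda>x. besselK 2 (\<alpha> (x, lam) * \<beta> * m / lam\<^sup>2)
                          / (\<alpha> (x, lam) * \<beta> * m / lam\<^sup>2))) ^ N))
      \<longlongrightarrow> - (1 / \<beta>) * ln ((m / (2 * pi * hbar\<^sup>2 * \<beta>)) powr (3 / 2 * real N) * (1 / fact N) *
             (integral V (\<lambda>x. exp (- (1/2) * \<beta> * m *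
                  deriv (deriv (\<lambda>l. \<alpha> (x, l))) 0))) ^ N))
     (at_right 0)"
proof (cases "V = {}")
  case True
  \<comment> \<open>Both sides are \<open>- (1 / \<beta>) * ln 0 = 0\<close>.\<close>
  then show ?thesis using params by (simp add: power_0_left)
next
  case False
  obtain U where U: "closure V \<times> {0..<lam0} \<subseteq> U" "smooth_on U \<alpha>" using smooth by blast
  define P where "P = m / (2 * pi * hbar\<^sup>2 * \<beta>)"
  define J where "J = integral V (\<lambda>x. exp (- (1/2) * \<beta> * m * deriv (deriv (\<lambda>l. \<alpha> (x, l))) 0))"
  define Z where "Z lam = 4 * pi * (m / (2 * pi * hbar * lam)) ^ 3 * exp (\<beta> * m / lam\<^sup>2) *
    integral V (\<lambda>x. besselK 2 (\<alpha> (x, lam) * \<beta> * m / lam\<^sup>2) / (\<alpha> (x, lam) * \<beta> * m / lam\<^sup>2))" for lam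
  have "(Z \<longlongrightarrow> P powr (3/2) * J) (at_right 0)"
    unfolding Z_def[abs_def] P_def J_def
    by (rule tendsto_partition_integral[OF V_region(1,2) params(1-3,5) U(2,1) pos init init_deriv])
  moreover have "0 < J"
    unfolding J_def using U params(5)
    by (intro integral_exp_second_deriv_pos[OF V_region(1,2) False U(2)]) auto
  moreover have "0 < P" using params by (simp add: P_def)
  ultimately have limit: "((\<lambda>lam. - (1 / \<beta>) * ln ((1 / fact N) * Z lam ^ N))
      \<longlongrightarrow> - (1 / \<beta>) * ln ((1 / fact N) * (P powr (3/2) * J) ^ N)) (at_right 0)"
    by (intro tendsto_intros) simp_all
  have "(1 / fact N) * (P powr (3/2) * J) ^ N = P powr (3 / 2 * real N) * (1 / fact N) * J ^ N"
    using \<open>0 < P\<close> by (simp add: power_mult_distrib powr_realpow[symmetric] powr_powr)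
  with limit show ?thesis
    unfolding Z_def P_def J_def by simp
qed

end
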